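(* (Transversality Mapping Theorem.) Let $E:\mathbb{R}^{N_x}\to\mathbb{R}$ be twice differentiable, and consider the optimal control problem (R): minimize $y(t_f)$ over state trajectories $(y(\cdot),\boldsymbol x(\cdot),\boldsymbol v(\cdot))$ with unconstrained controls $\boldsymbol u(t)\in\mathbb{R}^{N_x}$ and free final time $t_f$, subject to $\dot{\boldsymbol x}=\boldsymbol v$, $\dot{\boldsymbol v}=\boldsymbol u$, $\dot y=\nabla E(\boldsymbol x)\cdot\boldsymbol v$, $(\boldsymbol x(t_0),t_0)=(\boldsymbol x^0,t^0)$, $y(t_0)=E(\boldsymbol x^0)$, $\boldsymbol v(t_f)=\mathbf 0$, with $t_f$, $\boldsymbol x(t_f)$, $\boldsymbol v(t_0)$ free. Then the first-order necessary condition for the static problem $\min_{\boldsymbol x_f\in\mathbb{R}^{N_x}}E(\boldsymbol x_f)$ is embedded in the terminal transversality condition of (R): along any extremal of (R), the terminal transversality condition $\boldsymbol\lambda_x(t_f)=\mathbf 0$ implies $\nabla E(\boldsymbol x_f)=\mathbf 0$, where $\boldsymbol x_f=\boldsymbol x(t_f)$.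
   Context: The Pontryagin Hamiltonian of (R) is $H=\boldsymbol\lambda_x\cdot\boldsymbol v+\boldsymbol\lambda_v\cdot\boldsymbol u+\lambda_y\,\nabla E(\boldsymbol x)\cdot\boldsymbol v$. An extremal is a state–control trajectory together with costates $(\boldsymbol\lambda_x,\boldsymbol\lambda_v,\lambda_y)$ and a cost multiplier $\nu_0\ge0$, not all multipliers vanishing, satisfying the adjoint equations $\dot{\boldsymbol\lambda}_x=-\lambda_y\nabla^2E(\boldsymbol x)\boldsymbol v$, $\dot{\boldsymbol\lambda}_v=-\boldsymbol\lambda_x-\lambda_y\nabla E(\boldsymbol x)$, $\dot\lambda_y=0$; the transversality conditions $\boldsymbol\lambda_x(t_f)=\mathbf 0$, $\boldsymbol\lambda_v(t_0)=\mathbf 0$, $\lambda_y(t_f)=\nu_0$; and the Hamiltonian minimization condition ($\boldsymbol u(t)$ minimizes $H$ over $\mathbb{R}^{N_x}$, which for this $H$ linear in an unconstrained $\boldsymbol u$ forces $\partial_{\boldsymbol u}H=\boldsymbol\lambda_v(t)=\mathbf 0$ for all $t\in[t_0,t_f]$). *)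

theory Defs
  imports "HOL-Analysis.Analysis"
begin

text \<open>R^{N_x} is modelled by an arbitrary Euclidean space 'a.
  E is twice (Frechet) differentiable with gradient gE and Hessian HE.\<close>
definition twice_diff_grad_hess ::
  "('a::euclidean_space \<Rightarrow> real) \<Rightarrow> ('a \<Rightarrow> 'a) \<Rightarrow> ('a \<Rightarrow> 'a \<Rightarrow> 'a) \<Rightarrow> bool" where
  "twice_diff_grad_hess E gE HE \<longleftrightarrow>
     (\<forall>z. (E has_derivative (\<lambda>h. gE z \<bullet> h)) (at z) \<and> (gE has_derivative HE z) (at z))"

definition hamiltonian_R ::
  "('a::euclidean_space \<Rightarrow> 'a) \<Rightarrow> 'a \<Rightarrow> 'a \<Rightarrow> real \<Rightarrow> 'a \<Rightarrow> 'a \<Rightarrow> 'a \<Rightarrow> real" where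
  "hamiltonian_R gE lx lv ly z w u = lx \<bullet> w + lv \<bullet> u + ly * (gE z \<bullet> w)"

definition admissible_R ::
  "('a::euclidean_space \<Rightarrow> real) \<Rightarrow> ('a \<Rightarrow> 'a) \<Rightarrow> 'a \<Rightarrow> real \<Rightarrow> real \<Rightarrow>
   (real \<Rightarrow> real) \<Rightarrow> (real \<Rightarrow> 'a) \<Rightarrow> (real \<Rightarrow> 'a) \<Rightarrow> (real \<Rightarrow> 'a) \<Rightarrow> bool" where
  "admissible_R E gE x0 t0 tf y x v u \<longleftrightarrow>
     t0 < tf \<and> x t0 = x0 \<and> y t0 = E x0 \<and> v tf = 0 \<and>
     (\<forall>t\<in>{t0..tf}.
        (x has_vector_derivative v t) (at t within {t0..tf}) \<and>
        (v has_vector_derivative u t) (at t within {t0..tf}) \<and>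
        (y has_real_derivative (gE (x t) \<bullet> v t)) (at t within {t0..tf}))"

definition extremal_R ::
  "('a::euclidean_space \<Rightarrow> real) \<Rightarrow> ('a \<Rightarrow> 'a) \<Rightarrow> ('a \<Rightarrow> 'a \<Rightarrow> 'a) \<Rightarrow> 'a \<Rightarrow> real \<Rightarrow> real \<Rightarrow>
   (real \<Rightarrow> real) \<Rightarrow> (real \<Rightarrow> 'a) \<Rightarrow> (real \<Rightarrow> 'a) \<Rightarrow> (real \<Rightarrow> 'a) \<Rightarrow>
   (real \<Rightarrow> 'a) \<Rightarrow> (real \<Rightarrow> 'a) \<Rightarrow> (real \<Rightarrow> real) \<Rightarrow> real \<Rightarrow> bool" where
  "extremal_R E gE HE x0 t0 tf y x v u lx lv ly nu0 \<longleftrightarrow>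
     admissible_R E gE x0 t0 tf y x v u \<and>
     nu0 \<ge> 0 \<and>
     \<not> (nu0 = 0 \<and> (\<forall>t\<in>{t0..tf}. lx t = 0 \<and> lv t = 0 \<and> ly t = 0)) \<and>
     (\<forall>t\<in>{t0..tf}.
        (lx has_vector_derivative (- (ly t *\<^sub>R HE (x t) (v t)))) (at t within {t0..tf}) \<and>
        (lv has_vector_derivative (- lx t - ly t *\<^sub>R gE (x t))) (at t within {t0..tf}) \<and>
        (ly has_real_derivative 0) (at t within {t0..tf})) \<and>
     lx tf = 0 \<and> lv t0 = 0 \<and> ly tf = nu0 \<and>
     (\<forall>t\<in>{t0..tf}. \<forall>w.
        hamiltonian_R gE (lx t) (lv t) (ly t) (x t) (v t) (u t)
          \<le> hamiltonian_R gE (lx t) (lv t) (ly t) (x t) (v t) w)"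

end

theory Submission
  imports Defs
begin

text \<open>Since the Hamiltonian is linear in the unconstrained control, its minimisation forces
  \<open>\<lambda>\<^sub>v \<equiv> 0\<close>; the adjoint equation for \<open>\<lambda>\<^sub>v\<close> then becomes the stationarity identity
  \<open>\<lambda>\<^sub>x + \<lambda>\<^sub>y \<nabla>E(x) \<equiv> 0\<close>. The costate \<open>\<lambda>\<^sub>y\<close> is constant, equal to \<open>\<nu>\<^sub>0\<close>, and \<open>\<nu>\<^sub>0 = 0\<close>
  would make all multipliers vanish. Hence \<open>\<nu>\<^sub>0 > 0\<close>, and at \<open>t\<^sub>f\<close> the transversality
  condition \<open>\<lambda>\<^sub>x(t\<^sub>f) = 0\<close> leaves \<open>\<nu>\<^sub>0 \<nabla>E(x\<^sub>f) = 0\<close>.\<close>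

lemma inner_minimal_everywhere_imp_zero:
  fixes c u :: "'a::real_inner"
  assumes "\<And>w. c \<bullet> u \<le> c \<bullet> w"
  shows "c = 0"
proof -
  have "c \<bullet> u \<le> c \<bullet> (u - c)" by (rule assms)
  then have "c \<bullet> c \<le> 0" by (simp add: inner_diff_right)
  then show ?thesis by (metis inner_gt_zero_iff not_le)
qed

lemma has_vector_derivative_zero_if_constant_on_interval:
  fixes f :: "real \<Rightarrow> 'a::real_normed_vector"
  assumes "a < b" and "t \<in> {a..b}"
    and "\<And>s. s \<in> {a..b} \<Longrightarrow> f s = k"
    and "(f has_vector_derivative f') (at t within {a..b})"
  shows "f' = 0"
proof -
  have "(f has_vector_derivative 0) (at t within {a..b})"
    by (rule has_vector_derivative_transform_within[where f="\<lambda>_. k" and d=1])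
       (use assms(2,3) in auto)
  with assms show ?thesis
    using vector_derivative_unique_within_closed_interval[of a b t f f' 0] by simp
qed

context
  fixes E :: "'a::euclidean_space \<Rightarrow> real"
    and gE :: "'a \<Rightarrow> 'a" and HE :: "'a \<Rightarrow> 'a \<Rightarrow> 'a"
    and x0 :: 'a and t0 tf :: real
    and y :: "real \<Rightarrow> real" and x v u :: "real \<Rightarrow> 'a"
    and lx lv :: "real \<Rightarrow> 'a" and ly :: "real \<Rightarrow> real" and nu0 :: real
  assumes extremal: "extremal_R E gE HE x0 t0 tf y x v u lx lv ly nu0"
begin

lemma extremal_R_interval_nondegenerate: "t0 < tf"
  using extremal unfolding extremal_R_def admissible_R_def by blast

lemma extremal_R_control_costate_zero:
  assumes "t \<in> {t0..tf}"
  shows "lv t = 0"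
proof (rule inner_minimal_everywhere_imp_zero)
  fix w
  have "hamiltonian_R gE (lx t) (lv t) (ly t) (x t) (v t) (u t)
          \<le> hamiltonian_R gE (lx t) (lv t) (ly t) (x t) (v t) w"
    using extremal assms unfolding extremal_R_def by blast
  then show "lv t \<bullet> u t \<le> lv t \<bullet> w"
    by (simp add: hamiltonian_R_def)
qed

lemma extremal_R_stationarity:
  assumes "t \<in> {t0..tf}"
  shows "lx t + ly t *\<^sub>R gE (x t) = 0"
proof -
  have "(lv has_vector_derivative (- lx t - ly t *\<^sub>R gE (x t))) (at t within {t0..tf})"
    using extremal assms unfolding extremal_R_def by blast
  then have "- lx t - ly t *\<^sub>R gE (x t) = 0"
    using has_vector_derivative_zero_if_constant_on_interval[OF extremal_R_interval_nondegenerate assms]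
      extremal_R_control_costate_zero by blast
  then show ?thesis
    by (simp add: neg_eq_iff_add_eq_0)
qed

lemma extremal_R_cost_costate_constant:
  assumes "t \<in> {t0..tf}"
  shows "ly t = nu0"
proof -
  obtain c where c: "\<forall>s\<in>{t0..tf}. ly s = c"
    using has_field_derivative_zero_constant[of "{t0..tf}" ly] extremal
    unfolding extremal_R_def by auto
  have "tf \<in> {t0..tf}" using extremal_R_interval_nondegenerate by simp
  with c assms extremal show ?thesis
    unfolding extremal_R_def by auto
qed

lemma extremal_R_normal: "nu0 > 0"
proof -
  have "nu0 \<noteq> 0"
  proof
    assume "nu0 = 0"
    then have "lx t = 0 \<and> lv t = 0 \<and> ly t = 0" if "t \<in> {t0..tf}" for t
      using that extremal_R_cost_costate_constant extremal_R_stationarity[OF that]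
        extremal_R_control_costate_zero by simp
    with \<open>nu0 = 0\<close> extremal show False
      unfolding extremal_R_def by blast
  qed
  moreover have "nu0 \<ge> 0"
    using extremal unfolding extremal_R_def by blast
  ultimately show ?thesis by simp
qed

end

theorem theorem2:
  fixes E :: "'a::euclidean_space \<Rightarrow> real"
    and gE :: "'a \<Rightarrow> 'a" and HE :: "'a \<Rightarrow> 'a \<Rightarrow> 'a"
    and x0 :: 'a and t0 tf :: real
    and y :: "real \<Rightarrow> real" and x v u :: "real \<Rightarrow> 'a"
    and lx lv :: "real \<Rightarrow> 'a" and ly :: "real \<Rightarrow> real" and nu0 :: real
  assumes "twice_diff_grad_hess E gE HE"
    and "extremal_R E gE HE x0 t0 tf y x v u lx lv ly nu0"
  shows "lx tf = 0 \<longrightarrow> gE (x tf) = 0"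
proof
  assume "lx tf = 0"
  have tf: "tf \<in> {t0..tf}"
    using extremal_R_interval_nondegenerate[OF assms(2)] by simp
  have "nu0 *\<^sub>R gE (x tf) = 0"
    using extremal_R_stationarity[OF assms(2) tf] extremal_R_cost_costate_constant[OF assms(2) tf]
      \<open>lx tf = 0\<close> by simp
  with extremal_R_normal[OF assms(2)] show "gE (x tf) = 0" by simp
qed

end
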